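(* Assume $\alpha=\beta\ge1$ and $p\in\mathbb R\setminus\{0,1\}$. Let $\mathbf U=(U,V)$ with multiplier $\Lambda$ be the similarity profile and let $\mathbf u=(u,v)$ be a solution of the scaled system with $\rho=u/U$, $\zeta=v/V$. Then $\frac{\mathrm d}{\mathrm d\tau}\mathcal E_p(\mathbf u(\tau)|\mathbf U)=-\mathcal D_p(\rho,\zeta)$ with $$\mathcal D_p(\rho,\zeta)=\mathcal I_{p,\mathrm{Fisher}}(\rho,\zeta)+\tfrac12\,\mathcal E_p(\mathbf u|\mathbf U)-\mathcal I_{p,\Lambda}(\rho,\zeta)+e^\tau\mathcal D_{p,\mathrm{react}}(\rho,\zeta),$$ where $\mathcal D_{p,\mathrm{react}}(\rho,\zeta):=\int_{\mathbb R}kU^\alpha\frac{\alpha}{p-1}\big(\zeta^{p-1}-\rho^{p-1}\big)\big(\zeta^\alpha-\rho^\alpha\big)\mathrm dy\ge0$, $\mathcal I_{p,\mathrm{Fisher}}(\rho,\zeta):=\int_{\mathbb R}\big(d_1U\rho^{p-2}\rho_y^2+d_2V\zeta^{p-2}\zeta_y^2\big)\mathrm dy\ge0$, and $\mathcal I_{p,\Lambda}(\rho,\zeta):=\int_{\mathbb R}\frac1p\big(\zeta^p-\rho^p\big)\alpha\Lambda\,\mathrm dy$.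
   Context: Fix $d_1,d_2,k>0$, real stoichiometric coefficients $\alpha,\beta\ge1$ and $A_-,A_+>0$. The similarity profile is a triple $(U,V,\Lambda)$ with $U,V\in\mathrm C^2(\mathbb R)$ positive, bounded and bounded away from $0$, $\Lambda:\mathbb R\to\mathbb R$, satisfying $d_1U''+\tfrac y2U'+\alpha\Lambda=0$, $d_2V''+\tfrac y2V'-\beta\Lambda=0$, $U^\alpha=V^\beta$ on $\mathbb R$, and $U(\pm\infty)=A_\pm^\beta$, $V(\pm\infty)=A_\pm^\alpha$. The scaled system is $u_\tau=d_1u_{yy}+\tfrac y2u_y+e^\tau\alpha k(v^\beta-u^\alpha)$, $v_\tau=d_2v_{yy}+\tfrac y2v_y-e^\tau\beta k(v^\beta-u^\alpha)$ for $\tau>0$, $y\in\mathbb R$, with $(u,v)(\tau,\pm\infty)=(A_\pm^\beta,A_\pm^\alpha)$. A "solution" is a positive classical solution for which the relative entropy is finite and differentiable in $\tau$ with differentiation under the integral allowed, all integrals appearing are finite, and integrations by parts over $\mathbb R$ produce no boundary terms ($\rho,\zeta\to1$ at $\pm\infty$ with sufficient decay). Relative densities $\rho=u/U$, $\zeta=v/V$. Entropy functions: $F_p(z)=\frac{1}{p(p-1)}(z^p-pz+p-1)$ for $p\notin\{0,1\}$, $F_1(z)=z\log z-z+1$, $F_0(z)=z-\log z-1$. Relative entropy $\mathcal E_p(\mathbf u|\mathbf U)=\int_{\mathbb R}\big(UF_p(\rho)+VF_p(\zeta)\big)\mathrm dy$. *)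

theory Defs
  imports "HOL-Analysis.Analysis"
begin

definition Fent :: "real \<Rightarrow> real \<Rightarrow> real" where
  "Fent p z = (if p = 1 then z * ln z - z + 1
               else if p = 0 then z - ln z - 1
               else (z powr p - p * z + p - 1) / (p * (p - 1)))"

text \<open>Derivative of the entropy function (used only to phrase integrability hypotheses).\<close>
definition Fent' :: "real \<Rightarrow> real \<Rightarrow> real" where
  "Fent' p z = (if p = 1 then ln z
                else if p = 0 then 1 - 1 / z
                else (z powr (p - 1) - 1) / (p - 1))"

definition C2 :: "(real \<Rightarrow> real) \<Rightarrow> bool" where
  "C2 f \<longleftrightarrow> (\<forall>y. (f has_real_derivative deriv f y) (at y))
          \<and> (\<forall>y. (deriv f has_real_derivative deriv (deriv f) y) (at y))
          \<and> continuous_on UNIV (deriv (deriv f))"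

definition similarity_profile ::
  "real \<Rightarrow> real \<Rightarrow> real \<Rightarrow> real \<Rightarrow> real \<Rightarrow> real \<Rightarrow>
   (real \<Rightarrow> real) \<Rightarrow> (real \<Rightarrow> real) \<Rightarrow> (real \<Rightarrow> real) \<Rightarrow> bool" where
  "similarity_profile d1 d2 \<alpha> \<beta> Am Ap U V \<Lambda> \<longleftrightarrow>
     C2 U \<and> C2 V
   \<and> (\<forall>y. U y > 0 \<and> V y > 0)
   \<and> bounded (range U) \<and> bounded (range V)
   \<and> (\<exists>c>0. \<forall>y. U y \<ge> c \<and> V y \<ge> c)
   \<and> (\<forall>y. d1 * deriv (deriv U) y + y / 2 * deriv U y + \<alpha> * \<Lambda> y = 0)
   \<and> (\<forall>y. d2 * deriv (deriv V) y + y / 2 * deriv V y - \<beta> * \<Lambda> y = 0)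
   \<and> (\<forall>y. U y powr \<alpha> = V y powr \<beta>)
   \<and> (U \<longlongrightarrow> Ap powr \<beta>) at_top \<and> (U \<longlongrightarrow> Am powr \<beta>) at_bot
   \<and> (V \<longlongrightarrow> Ap powr \<alpha>) at_top \<and> (V \<longlongrightarrow> Am powr \<alpha>) at_bot"

definition rel_entropy ::
  "real \<Rightarrow> (real \<Rightarrow> real) \<Rightarrow> (real \<Rightarrow> real) \<Rightarrow> (real \<Rightarrow> real) \<Rightarrow> (real \<Rightarrow> real) \<Rightarrow> real" where
  "rel_entropy p U V u v =
     (\<integral>y. U y * Fent p (u y / U y) + V y * Fent p (v y / V y) \<partial>lborel)"

definition fisher_info ::
  "real \<Rightarrow> real \<Rightarrow> real \<Rightarrow> (real \<Rightarrow> real) \<Rightarrow> (real \<Rightarrow> real)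
   \<Rightarrow> (real \<Rightarrow> real) \<Rightarrow> (real \<Rightarrow> real) \<Rightarrow> real" where
  "fisher_info p d1 d2 U V \<rho> \<zeta> =
     (\<integral>y. d1 * U y * \<rho> y powr (p - 2) * (deriv \<rho> y)\<^sup>2
          + d2 * V y * \<zeta> y powr (p - 2) * (deriv \<zeta> y)\<^sup>2 \<partial>lborel)"

definition lambda_info ::
  "real \<Rightarrow> real \<Rightarrow> (real \<Rightarrow> real) \<Rightarrow> (real \<Rightarrow> real) \<Rightarrow> (real \<Rightarrow> real) \<Rightarrow> real" where
  "lambda_info p \<alpha> \<Lambda> \<rho> \<zeta> =
     (\<integral>y. 1 / p * (\<zeta> y powr p - \<rho> y powr p) * \<alpha> * \<Lambda> y \<partial>lborel)"

definition react_diss ::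
  "real \<Rightarrow> real \<Rightarrow> real \<Rightarrow> (real \<Rightarrow> real) \<Rightarrow> (real \<Rightarrow> real) \<Rightarrow> (real \<Rightarrow> real) \<Rightarrow> real" where
  "react_diss p k \<alpha> U \<rho> \<zeta> =
     (\<integral>y. k * U y powr \<alpha> * (\<alpha> / (p - 1))
          * (\<zeta> y powr (p - 1) - \<rho> y powr (p - 1)) * (\<zeta> y powr \<alpha> - \<rho> y powr \<alpha>) \<partial>lborel)"

definition scaled_classical_solution ::
  "real \<Rightarrow> real \<Rightarrow> real \<Rightarrow> real \<Rightarrow> real \<Rightarrow> real \<Rightarrow> real \<Rightarrow>
   (real \<Rightarrow> real \<Rightarrow> real) \<Rightarrow> (real \<Rightarrow> real \<Rightarrow> real) \<Rightarrow> bool" where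
  "scaled_classical_solution d1 d2 k \<alpha> \<beta> Am Ap u v \<longleftrightarrow>
     (\<forall>t>0. \<forall>y. u t y > 0 \<and> v t y > 0)
   \<and> (\<forall>t>0. C2 (u t) \<and> C2 (v t))
   \<and> (\<forall>t>0. \<forall>y. ((\<lambda>s. u s y) has_real_derivative deriv (\<lambda>s. u s y) t) (at t)
                \<and> ((\<lambda>s. v s y) has_real_derivative deriv (\<lambda>s. v s y) t) (at t))
   \<and> continuous_on ({0<..} \<times> UNIV) (\<lambda>(t, y). u t y)
   \<and> continuous_on ({0<..} \<times> UNIV) (\<lambda>(t, y). v t y)
   \<and> continuous_on ({0<..} \<times> UNIV) (\<lambda>(t, y). deriv (\<lambda>s. u s y) t)
   \<and> continuous_on ({0<..} \<times> UNIV) (\<lambda>(t, y). deriv (\<lambda>s. v s y) t)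
   \<and> continuous_on ({0<..} \<times> UNIV) (\<lambda>(t, y). deriv (u t) y)
   \<and> continuous_on ({0<..} \<times> UNIV) (\<lambda>(t, y). deriv (v t) y)
   \<and> continuous_on ({0<..} \<times> UNIV) (\<lambda>(t, y). deriv (deriv (u t)) y)
   \<and> continuous_on ({0<..} \<times> UNIV) (\<lambda>(t, y). deriv (deriv (v t)) y)
   \<and> (\<forall>t>0. \<forall>y. deriv (\<lambda>s. u s y) t =
          d1 * deriv (deriv (u t)) y + y / 2 * deriv (u t) y
          + exp t * \<alpha> * k * (v t y powr \<beta> - u t y powr \<alpha>))
   \<and> (\<forall>t>0. \<forall>y. deriv (\<lambda>s. v s y) t =
          d2 * deriv (deriv (v t)) y + y / 2 * deriv (v t) y
          - exp t * \<beta> * k * (v t y powr \<beta> - u t y powr \<alpha>))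
   \<and> (\<forall>t>0. (u t \<longlongrightarrow> Ap powr \<beta>) at_top \<and> (u t \<longlongrightarrow> Am powr \<beta>) at_bot
          \<and> (v t \<longlongrightarrow> Ap powr \<alpha>) at_top \<and> (v t \<longlongrightarrow> Am powr \<alpha>) at_bot)"

text \<open>Finiteness of the integrals appearing in the entropy computation for one component
  w with reference profile W, diffusion d, profile source term L (= \<alpha>\<Lambda> for u, -\<beta>\<Lambda> for v)
  and reaction term R, together with vanishing of the boundary terms of the two
  integrations by parts over \<real>.\<close>
definition component_admissible ::
  "real \<Rightarrow> real \<Rightarrow> (real \<Rightarrow> real) \<Rightarrow> (real \<Rightarrow> real) \<Rightarrow> (real \<Rightarrow> real \<Rightarrow> real)
   \<Rightarrow> (real \<Rightarrow> real \<Rightarrow> real) \<Rightarrow> bool" where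
  "component_admissible p d W L R w \<longleftrightarrow>
     (\<forall>t>0. let r = (\<lambda>y. w t y / W y) in
        integrable lborel (\<lambda>y. W y * Fent p (r y))
      \<and> integrable lborel (\<lambda>y. d * W y * r y powr (p - 2) * (deriv r y)\<^sup>2)
      \<and> integrable lborel (\<lambda>y. L y * Fent p (r y))
      \<and> integrable lborel (\<lambda>y. L y * r y * Fent' p (r y))
      \<and> integrable lborel (\<lambda>y. Fent' p (r y) * R t y)
      \<and> integrable lborel (\<lambda>y. Fent' p (r y) * d * deriv (\<lambda>z. W z * deriv r z) y)
      \<and> integrable lborel (\<lambda>y. Fent' p (r y) * (d * deriv W y + y / 2 * W y) * deriv r y)
      \<and> ((\<lambda>y. W y * Fent' p (r y) * deriv r y) \<longlongrightarrow> 0) at_top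
      \<and> ((\<lambda>y. W y * Fent' p (r y) * deriv r y) \<longlongrightarrow> 0) at_bot
      \<and> ((\<lambda>y. (d * deriv W y + y / 2 * W y) * Fent p (r y)) \<longlongrightarrow> 0) at_top
      \<and> ((\<lambda>y. (d * deriv W y + y / 2 * W y) * Fent p (r y)) \<longlongrightarrow> 0) at_bot)"

text \<open>A "solution" in the sense of the paper (for the entropy index p): a positive classical
  solution whose relative entropy is finite and differentiable in \<tau>, with differentiation
  under the integral sign allowed, all integrals finite and no boundary terms.\<close>
definition scaled_solution ::
  "real \<Rightarrow> real \<Rightarrow> real \<Rightarrow> real \<Rightarrow> real \<Rightarrow> real \<Rightarrow> real \<Rightarrow> real \<Rightarrow>
   (real \<Rightarrow> real) \<Rightarrow> (real \<Rightarrow> real) \<Rightarrow> (real \<Rightarrow> real) \<Rightarrow>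
   (real \<Rightarrow> real \<Rightarrow> real) \<Rightarrow> (real \<Rightarrow> real \<Rightarrow> real) \<Rightarrow> bool" where
  "scaled_solution p d1 d2 k \<alpha> \<beta> Am Ap U V \<Lambda> u v \<longleftrightarrow>
     scaled_classical_solution d1 d2 k \<alpha> \<beta> Am Ap u v
   \<and> component_admissible p d1 U (\<lambda>y. \<alpha> * \<Lambda> y)
       (\<lambda>t y. exp t * \<alpha> * k * (v t y powr \<beta> - u t y powr \<alpha>)) u
   \<and> component_admissible p d2 V (\<lambda>y. - \<beta> * \<Lambda> y)
       (\<lambda>t y. - exp t * \<beta> * k * (v t y powr \<beta> - u t y powr \<alpha>)) v
   \<and> (\<forall>t>0.
        integrable lborel (\<lambda>y. deriv (\<lambda>s. U y * Fent p (u s y / U y)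
                                         + V y * Fent p (v s y / V y)) t)
      \<and> ((\<lambda>s. rel_entropy p U V (u s) (v s)) has_real_derivative
           (\<integral>y. deriv (\<lambda>s. U y * Fent p (u s y / U y)
                           + V y * Fent p (v s y / V y)) t \<partial>lborel)) (at t))"

end

theory Submission
  imports Defs
begin

text \<open>Differentiating under the integral, a component w with profile W and relative density
  r = w/W contributes the integral of F_p'(r) w_tau. The profile equation
  d W'' + y/2 W' + L = 0 (with L = alpha Lambda for u and L = -beta Lambda for v) rewrites the
  diffusion-drift part of w_tau as d (W r')' + (d W' + y/2 W) r' - L r. Integrating the first term
  by parts yields minus the Fisher information; integrating the second by parts, using
  (d W' + y/2 W)' = W/2 - L, yields -E/2 plus a Lambda-term, and the Lambda-terms of both
  components combine into I_{p,Lambda} through F_p(z) - z F_p'(z) = (1 - z^p)/p. Since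
  U^alpha = V^alpha, the reaction terms combine into -e^tau D_react, whose integrand is
  nonnegative because z^(p-1)/(p-1) and z^alpha are both increasing.\<close>

lemma integral_deriv_eq_0_if_tendsto_0_at_infinity:
  fixes f f' :: "real \<Rightarrow> real"
  assumes der: "\<And>y. (f has_real_derivative f' y) (at y)"
    and int: "integrable lborel f'"
    and top: "(f \<longlongrightarrow> 0) at_top" and bot: "(f \<longlongrightarrow> 0) at_bot"
  shows "integral\<^sup>L lborel f' = 0"
proof -
  define s where "s = (\<lambda>n::nat. \<lambda>x. indicator {- real n..real n} x *\<^sub>R f' x)"
  have meas: "f' \<in> borel_measurable lborel"
    using int by auto
  have "(\<lambda>n. integral\<^sup>L lborel (s n)) \<longlonglongrightarrow> integral\<^sup>L lborel f'"
  proof (rule integral_dominated_convergence[where w="\<lambda>x. norm (f' x)"])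
    show "s n \<in> borel_measurable lborel" for n
      unfolding s_def using meas by measurable
    show "AE x in lborel. (\<lambda>n. s n x) \<longlonglongrightarrow> f' x"
    proof (rule AE_I2)
      fix x :: real
      obtain N :: nat where "\<bar>x\<bar> \<le> real N"
        using real_arch_simple by blast
      then have "\<forall>n\<ge>N. s n x = f' x"
        unfolding s_def by (auto simp: indicator_def)
      then show "(\<lambda>n. s n x) \<longlonglongrightarrow> f' x"
        by (intro tendsto_eventually) (auto simp: eventually_sequentially)
    qed
    show "AE x in lborel. norm (s n x) \<le> norm (f' x)" for n
      unfolding s_def by (auto simp: indicator_def)
  qed (use int meas in auto)
  moreover have "integral\<^sup>L lborel (s n) = f (real n) - f (- real n)" for n
  proof -
    have "(f' has_integral (f (real n) - f (- real n))) {- real n..real n}"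
      by (rule fundamental_theorem_of_calculus)
        (auto simp: has_real_derivative_iff_has_vector_derivative[symmetric]
          intro!: has_field_derivative_at_within der)
    moreover have "set_integrable lborel {- real n..real n} f'"
      unfolding set_integrable_def using int by (intro integrable_mult_indicator) auto
    ultimately show ?thesis
      unfolding s_def using set_borel_integral_eq_integral(2) integral_unique
      by (metis set_lebesgue_integral_def)
  qed
  moreover have "(\<lambda>n. f (real n) - f (- real n)) \<longlonglongrightarrow> 0 - 0"
  proof (intro tendsto_diff)
    show "(\<lambda>n. f (real n)) \<longlonglongrightarrow> 0"
      using top filterlim_real_sequentially filterlim_compose by blast
    have "filterlim (\<lambda>n::nat. - real n) at_bot sequentially"
      using filterlim_real_sequentially by (simp add: filterlim_uminus_at_top)
    then show "(\<lambda>n. f (- real n)) \<longlonglongrightarrow> 0"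
      using bot filterlim_compose by blast
  qed
  ultimately show ?thesis
    using LIMSEQ_unique by fastforce
qed

lemma integral_by_parts_real_line:
  fixes f g f' g' :: "real \<Rightarrow> real"
  assumes f: "\<And>y. (f has_real_derivative f' y) (at y)"
    and g: "\<And>y. (g has_real_derivative g' y) (at y)"
    and int_f'g: "integrable lborel (\<lambda>y. f' y * g y)"
    and int_fg': "integrable lborel (\<lambda>y. f y * g' y)"
    and top: "((\<lambda>y. f y * g y) \<longlongrightarrow> 0) at_top"
    and bot: "((\<lambda>y. f y * g y) \<longlongrightarrow> 0) at_bot"
  shows "(\<integral>y. f y * g' y \<partial>lborel) = - (\<integral>y. f' y * g y \<partial>lborel)"
proof -
  have "((\<lambda>y. f y * g y) has_real_derivative f' y * g y + f y * g' y) (at y)" for y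
    using DERIV_mult'[OF f g] by (simp add: algebra_simps)
  then have "(\<integral>y. f' y * g y + f y * g' y \<partial>lborel) = 0"
    using int_f'g int_fg' top bot by (intro integral_deriv_eq_0_if_tendsto_0_at_infinity) auto
  then show ?thesis
    using int_f'g int_fg' by simp
qed

lemma powr_diff_div_nonneg:
  fixes a b q :: real
  assumes "0 < b" "b \<le> a" "q \<noteq> 0"
  shows "(a powr q - b powr q) / q \<ge> 0"
proof (cases "q > 0")
  case True
  then show ?thesis
    using assms by (simp add: powr_mono2)
next
  case False
  then have "q < 0" using assms(3) by simp
  moreover have "a powr q \<le> b powr q"
    using powr_less_mono2_neg[OF \<open>q < 0\<close>, of b a] assms by (cases "a = b") auto
  ultimately show ?thesis
    by (simp add: divide_nonpos_neg)
qed

lemma powr_diff_div_mult_powr_diff_nonneg: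
  fixes a b q s :: real
  assumes "a > 0" "b > 0" "q \<noteq> 0" "s > 0"
  shows "(a powr q - b powr q) / q * (a powr s - b powr s) \<ge> 0"
proof (cases "b \<le> a")
  case True
  then show ?thesis
    using assms powr_diff_div_nonneg[of b a q] powr_mono2[of s b a]
    by (intro mult_nonneg_nonneg) auto
next
  case False
  have "(a powr q - b powr q) / q * (a powr s - b powr s)
      = (b powr q - a powr q) / q * (b powr s - a powr s)"
    by (simp add: field_simps)
  then show ?thesis
    using False assms powr_diff_div_nonneg[of a b q] powr_mono2[of s a b]
    by (metis diff_ge_0_iff_ge less_eq_real_def linorder_not_le mult_nonneg_nonneg)
qed

lemma Fent_minus_mult_Fent':
  assumes "p \<noteq> 0" "p \<noteq> 1" "z > 0"
  shows "Fent p z - z * Fent' p z = (1 - z powr p) / p"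
proof -
  define P where "P = z powr p"
  have zQ: "z * z powr (p - 1) = P"
    using assms(3) by (simp add: P_def powr_diff)
  have "z * Fent' p z = (z * z powr (p - 1) - z) / (p - 1)"
    using assms by (simp add: Fent'_def right_diff_distrib)
  also have "\<dots> = (p * (z * z powr (p - 1) - z)) / (p * (p - 1))"
    using assms(1) by simp
  finally have "Fent p z - z * Fent' p z
      = (P - p * z + p - 1) / (p * (p - 1)) - (p * (z * z powr (p - 1) - z)) / (p * (p - 1))"
    using assms by (simp add: Fent_def P_def)
  also have "\<dots> = ((p - 1) * (1 - P)) / (p * (p - 1))"
    unfolding zQ diff_divide_distrib[symmetric] by (simp add: algebra_simps)
  also have "\<dots> = (1 - P) / p"
    using assms(2) by simp
  finally show ?thesis unfolding P_def .
qed

lemma has_real_derivative_Fent: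
  assumes "p \<noteq> 0" "p \<noteq> 1" "z > 0"
  shows "(Fent p has_real_derivative Fent' p z) (at z)"
proof -
  have "((\<lambda>z. (z powr p - p * z + p - 1) / (p * (p - 1))) has_real_derivative
      (p * z powr (p - 1) - p * 1 + 0 - 0) / (p * (p - 1))) (at z)"
    using assms by (auto intro!: derivative_eq_intros)
  moreover have "(p * z powr (p - 1) - p * 1 + 0 - 0) / (p * (p - 1)) = Fent' p z"
    using assms by (simp add: Fent'_def field_simps)
  moreover have "Fent p = (\<lambda>z. (z powr p - p * z + p - 1) / (p * (p - 1)))"
    using assms by (auto simp: Fent_def fun_eq_iff)
  ultimately show ?thesis
    by simp
qed

lemma has_real_derivative_Fent':
  assumes "p \<noteq> 0" "p \<noteq> 1" "z > 0"
  shows "(Fent' p has_real_derivative z powr (p - 2)) (at z)"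
proof -
  have "((\<lambda>z. (z powr (p - 1) - 1) / (p - 1)) has_real_derivative
      ((p - 1) * z powr (p - 2)) / (p - 1)) (at z)"
    using assms by (auto intro!: derivative_eq_intros simp: diff_diff_eq)
  moreover have "Fent' p = (\<lambda>z. (z powr (p - 1) - 1) / (p - 1))"
    using assms by (auto simp: Fent'_def fun_eq_iff)
  ultimately show ?thesis
    using assms by simp
qed

lemma relative_density_derivatives:
  fixes W w r :: "real \<Rightarrow> real"
  assumes W: "C2 W" "\<And>y. W y > 0" and w: "C2 w"
    and r: "r = (\<lambda>y. w y / W y)"
  shows "(r has_real_derivative deriv r y) (at y)"
    and "W y * deriv r y = deriv w y - deriv W y * r y"
    and "((\<lambda>z. W z * deriv r z) has_real_derivative deriv (\<lambda>z. W z * deriv r z) y) (at y)"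
    and "deriv (\<lambda>z. W z * deriv r z) y
      = deriv (deriv w) y - deriv (deriv W) y * r y - deriv W y * deriv r y"
proof -
  have dW: "(W has_real_derivative deriv W x) (at x)"
    and ddW: "(deriv W has_real_derivative deriv (deriv W) x) (at x)"
    and dw: "(w has_real_derivative deriv w x) (at x)"
    and ddw: "(deriv w has_real_derivative deriv (deriv w) x) (at x)" for x
    using W(1) w unfolding C2_def by auto
  have dr: "(r has_real_derivative (deriv w x * W x - w x * deriv W x) / (W x * W x)) (at x)" for x
    unfolding r using W(2)[of x] by (intro DERIV_divide dw dW) auto
  then have deriv_r: "deriv r x = (deriv w x * W x - w x * deriv W x) / (W x * W x)" for x
    by (rule DERIV_imp_deriv)
  show "(r has_real_derivative deriv r y) (at y)"
    using dr deriv_r by simp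
  have flux: "(\<lambda>z. W z * deriv r z) = (\<lambda>z. deriv w z - deriv W z * r z)"
  proof
    fix z
    show "W z * deriv r z = deriv w z - deriv W z * r z"
      unfolding deriv_r using W(2)[of z] by (simp add: r field_simps)
  qed
  then show "W y * deriv r y = deriv w y - deriv W y * r y"
    by (rule fun_cong)
  have "((\<lambda>z. W z * deriv r z) has_real_derivative
      deriv (deriv w) y - deriv (deriv W) y * r y - deriv W y * deriv r y) (at y)"
    unfolding flux using DERIV_diff[OF ddw DERIV_mult[OF ddW \<open>(r has_real_derivative deriv r y) (at y)\<close>]]
    by (simp add: algebra_simps)
  moreover from this show "deriv (\<lambda>z. W z * deriv r z) y
      = deriv (deriv w) y - deriv (deriv W) y * r y - deriv W y * deriv r y"
    by (rule DERIV_imp_deriv)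
  ultimately show "((\<lambda>z. W z * deriv r z) has_real_derivative deriv (\<lambda>z. W z * deriv r z) y) (at y)"
    by simp
qed

lemma integral_Fent'_mult_deriv_flux:
  fixes W r :: "real \<Rightarrow> real"
  assumes p: "p \<noteq> 0" "p \<noteq> 1" and r_pos: "\<And>y. r y > 0"
    and r: "\<And>y. (r has_real_derivative deriv r y) (at y)"
    and flux: "\<And>y. ((\<lambda>z. W z * deriv r z) has_real_derivative deriv (\<lambda>z. W z * deriv r z) y) (at y)"
    and int_fisher: "integrable lborel (\<lambda>y. d * W y * r y powr (p - 2) * (deriv r y)\<^sup>2)"
    and int: "integrable lborel (\<lambda>y. Fent' p (r y) * (d * deriv (\<lambda>z. W z * deriv r z) y))"
    and top: "((\<lambda>y. W y * Fent' p (r y) * deriv r y) \<longlongrightarrow> 0) at_top"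
    and bot: "((\<lambda>y. W y * Fent' p (r y) * deriv r y) \<longlongrightarrow> 0) at_bot"
  shows "(\<integral>y. Fent' p (r y) * (d * deriv (\<lambda>z. W z * deriv r z) y) \<partial>lborel)
    = - (\<integral>y. d * W y * r y powr (p - 2) * (deriv r y)\<^sup>2 \<partial>lborel)"
proof -
  have fisher: "(\<lambda>y. d * W y * r y powr (p - 2) * (deriv r y)\<^sup>2)
      = (\<lambda>y. r y powr (p - 2) * deriv r y * (d * (W y * deriv r y)))"
    by (simp add: fun_eq_iff power2_eq_square algebra_simps)
  show ?thesis
    unfolding fisher
  proof (rule integral_by_parts_real_line[OF _ _ _ int])
    show "((\<lambda>y. Fent' p (r y)) has_real_derivative r y powr (p - 2) * deriv r y) (at y)" for y
      by (rule DERIV_chain2[OF has_real_derivative_Fent'[OF p r_pos] r])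
    show "((\<lambda>y. d * (W y * deriv r y)) has_real_derivative d * deriv (\<lambda>z. W z * deriv r z) y) (at y)"
      for y
      by (rule DERIV_cmult[OF flux])
    show "integrable lborel (\<lambda>y. r y powr (p - 2) * deriv r y * (d * (W y * deriv r y)))"
      using int_fisher unfolding fisher .
    show "((\<lambda>y. Fent' p (r y) * (d * (W y * deriv r y))) \<longlongrightarrow> 0) at_top"
      using tendsto_mult_left_zero[OF top, of d] by (simp add: algebra_simps)
    show "((\<lambda>y. Fent' p (r y) * (d * (W y * deriv r y))) \<longlongrightarrow> 0) at_bot"
      using tendsto_mult_left_zero[OF bot, of d] by (simp add: algebra_simps)
  qed
qed

lemma integral_drift_mult_deriv_Fent:
  fixes W L r :: "real \<Rightarrow> real"
  assumes p: "p \<noteq> 0" "p \<noteq> 1" and r_pos: "\<And>y. r y > 0"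
    and r: "\<And>y. (r has_real_derivative deriv r y) (at y)"
    and W: "C2 W" and profile: "\<And>y. d * deriv (deriv W) y + y / 2 * deriv W y + L y = 0"
    and int_entropy: "integrable lborel (\<lambda>y. W y * Fent p (r y))"
    and int_LF: "integrable lborel (\<lambda>y. L y * Fent p (r y))"
    and int: "integrable lborel (\<lambda>y. (d * deriv W y + y / 2 * W y) * (Fent' p (r y) * deriv r y))"
    and top: "((\<lambda>y. (d * deriv W y + y / 2 * W y) * Fent p (r y)) \<longlongrightarrow> 0) at_top"
    and bot: "((\<lambda>y. (d * deriv W y + y / 2 * W y) * Fent p (r y)) \<longlongrightarrow> 0) at_bot"
  shows "(\<integral>y. (d * deriv W y + y / 2 * W y) * (Fent' p (r y) * deriv r y) \<partial>lborel)
    = (\<integral>y. L y * Fent p (r y) \<partial>lborel) - 1 / 2 * (\<integral>y. W y * Fent p (r y) \<partial>lborel)"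
proof -
  have int_by_parts: "(\<integral>y. (d * deriv W y + y / 2 * W y) * (Fent' p (r y) * deriv r y) \<partial>lborel)
      = - (\<integral>y. (1 / 2 * W y - L y) * Fent p (r y) \<partial>lborel)"
  proof (rule integral_by_parts_real_line[OF _ _ _ int top bot])
    show "((\<lambda>y. d * deriv W y + y / 2 * W y) has_real_derivative 1 / 2 * W y - L y) (at y)" for y
    proof -
      have "(W has_real_derivative deriv W y) (at y)"
        and "(deriv W has_real_derivative deriv (deriv W) y) (at y)"
        using W unfolding C2_def by auto
      then have "((\<lambda>y. d * deriv W y + y / 2 * W y) has_real_derivative
          d * deriv (deriv W) y + (1 / 2 * W y + y / 2 * deriv W y)) (at y)"
        by (auto intro!: derivative_eq_intros simp: algebra_simps)
      moreover have "d * deriv (deriv W) y + (1 / 2 * W y + y / 2 * deriv W y) = 1 / 2 * W y - L y"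
        using profile[of y] by linarith
      ultimately show ?thesis
        by (simp only:)
    qed
    show "((\<lambda>y. Fent p (r y)) has_real_derivative Fent' p (r y) * deriv r y) (at y)" for y
      by (rule DERIV_chain2[OF has_real_derivative_Fent[OF p r_pos] r])
    show "integrable lborel (\<lambda>y. (1 / 2 * W y - L y) * Fent p (r y))"
      using int_entropy int_LF by (simp add: left_diff_distrib mult.assoc)
  qed
  also have "\<dots> = (\<integral>y. L y * Fent p (r y) \<partial>lborel) - 1 / 2 * (\<integral>y. W y * Fent p (r y) \<partial>lborel)"
    using int_entropy int_LF by (simp add: left_diff_distrib mult.assoc)
  finally show ?thesis .
qed

lemma component_entropy_production:
  fixes p d t :: real and W L :: "real \<Rightarrow> real" and R w :: "real \<Rightarrow> real \<Rightarrow> real"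
  assumes p: "p \<noteq> 0" "p \<noteq> 1"
    and W: "C2 W" "\<And>y. W y > 0"
    and profile: "\<And>y. d * deriv (deriv W) y + y / 2 * deriv W y + L y = 0"
    and w: "C2 (w t)" "\<And>y. w t y > 0"
    and adm: "component_admissible p d W L R w" and t: "t > 0"
  defines "r \<equiv> \<lambda>y. w t y / W y"
  shows "integrable lborel
      (\<lambda>y. Fent' p (r y) * (d * deriv (deriv (w t)) y + y / 2 * deriv (w t) y + R t y))"
    and "(\<integral>y. Fent' p (r y) * (d * deriv (deriv (w t)) y + y / 2 * deriv (w t) y + R t y) \<partial>lborel)
      = - (\<integral>y. d * W y * r y powr (p - 2) * (deriv r y)\<^sup>2 \<partial>lborel)
        + (\<integral>y. L y * Fent p (r y) \<partial>lborel) - 1 / 2 * (\<integral>y. W y * Fent p (r y) \<partial>lborel)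
        - (\<integral>y. L y * r y * Fent' p (r y) \<partial>lborel) + (\<integral>y. Fent' p (r y) * R t y \<partial>lborel)"
proof -
  define A where "A = (\<lambda>y. Fent' p (r y) * (d * deriv (\<lambda>z. W z * deriv r z) y))"
  define B where "B = (\<lambda>y. (d * deriv W y + y / 2 * W y) * (Fent' p (r y) * deriv r y))"
  have int_entropy: "integrable lborel (\<lambda>y. W y * Fent p (r y))"
    and int_fisher: "integrable lborel (\<lambda>y. d * W y * r y powr (p - 2) * (deriv r y)\<^sup>2)"
    and int_LF: "integrable lborel (\<lambda>y. L y * Fent p (r y))"
    and int_LrF': "integrable lborel (\<lambda>y. L y * r y * Fent' p (r y))"
    and int_reaction: "integrable lborel (\<lambda>y. Fent' p (r y) * R t y)"
    and int_A: "integrable lborel A"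
    and int_B: "integrable lborel B"
    and flux_top: "((\<lambda>y. W y * Fent' p (r y) * deriv r y) \<longlongrightarrow> 0) at_top"
    and flux_bot: "((\<lambda>y. W y * Fent' p (r y) * deriv r y) \<longlongrightarrow> 0) at_bot"
    and drift_top: "((\<lambda>y. (d * deriv W y + y / 2 * W y) * Fent p (r y)) \<longlongrightarrow> 0) at_top"
    and drift_bot: "((\<lambda>y. (d * deriv W y + y / 2 * W y) * Fent p (r y)) \<longlongrightarrow> 0) at_bot"
    using adm t unfolding component_admissible_def Let_def r_def A_def B_def
    by (auto simp: mult.assoc mult.left_commute)
  have r_pos: "r y > 0" for y
    using W(2) w(2) by (simp add: r_def)
  note r_derivs = relative_density_derivatives[OF W w(1) r_def[THEN meta_eq_to_obj_eq]]
  have decomp: "Fent' p (r y) * (d * deriv (deriv (w t)) y + y / 2 * deriv (w t) y + R t y)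
      = A y + B y - L y * r y * Fent' p (r y) + Fent' p (r y) * R t y" for y
  proof -
    have "d * deriv (deriv (w t)) y + y / 2 * deriv (w t) y
        = d * deriv (\<lambda>z. W z * deriv r z) y + (d * deriv W y + y / 2 * W y) * deriv r y - L y * r y"
      using r_derivs(2,4)[of y] profile[of y] by algebra
    then show ?thesis
      unfolding A_def B_def by algebra
  qed
  have "integral\<^sup>L lborel A = - (\<integral>y. d * W y * r y powr (p - 2) * (deriv r y)\<^sup>2 \<partial>lborel)"
    unfolding A_def using int_A
    by (intro integral_Fent'_mult_deriv_flux p r_pos r_derivs(1,3) int_fisher flux_top flux_bot)
      (simp add: A_def)
  moreover have "integral\<^sup>L lborel B
      = (\<integral>y. L y * Fent p (r y) \<partial>lborel) - 1 / 2 * (\<integral>y. W y * Fent p (r y) \<partial>lborel)"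
    unfolding B_def using int_B
    by (intro integral_drift_mult_deriv_Fent p r_pos r_derivs(1) W(1) profile int_entropy int_LF
        drift_top drift_bot) (simp add: B_def)
  moreover have "(\<integral>y. A y + B y - L y * r y * Fent' p (r y) + Fent' p (r y) * R t y \<partial>lborel)
      = integral\<^sup>L lborel A + integral\<^sup>L lborel B
        - (\<integral>y. L y * r y * Fent' p (r y) \<partial>lborel) + (\<integral>y. Fent' p (r y) * R t y \<partial>lborel)"
    using int_A int_B int_LrF' int_reaction by simp
  ultimately show "(\<integral>y. Fent' p (r y) * (d * deriv (deriv (w t)) y + y / 2 * deriv (w t) y + R t y) \<partial>lborel)
      = - (\<integral>y. d * W y * r y powr (p - 2) * (deriv r y)\<^sup>2 \<partial>lborel)
        + (\<integral>y. L y * Fent p (r y) \<partial>lborel) - 1 / 2 * (\<integral>y. W y * Fent p (r y) \<partial>lborel)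
        - (\<integral>y. L y * r y * Fent' p (r y) \<partial>lborel) + (\<integral>y. Fent' p (r y) * R t y \<partial>lborel)"
    unfolding decomp by simp
  show "integrable lborel
      (\<lambda>y. Fent' p (r y) * (d * deriv (deriv (w t)) y + y / 2 * deriv (w t) y + R t y))"
    unfolding decomp using int_A int_B int_LrF' int_reaction by auto
qed

lemma has_real_derivative_weighted_Fent:
  assumes "p \<noteq> 0" "p \<noteq> 1" "W > 0" "w t > 0" "(w has_real_derivative w') (at t)"
  shows "((\<lambda>s. W * Fent p (w s / W)) has_real_derivative Fent' p (w t / W) * w') (at t)"
proof -
  have "((\<lambda>s. W * Fent p (w s / W)) has_real_derivative W * (Fent' p (w t / W) * (w' / W))) (at t)"
    using assms by (intro DERIV_cmult DERIV_chain2[OF has_real_derivative_Fent] DERIV_cdivide) auto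
  then show ?thesis
    using assms(3) by simp
qed

lemma lambda_info_eq_Fent_integrals:
  fixes \<rho> \<zeta> \<Lambda> :: "real \<Rightarrow> real"
  assumes p: "p \<noteq> 0" "p \<noteq> 1" and pos: "\<And>y. \<rho> y > 0" "\<And>y. \<zeta> y > 0"
    and "integrable lborel (\<lambda>y. \<alpha> * \<Lambda> y * Fent p (\<rho> y))"
    and "integrable lborel (\<lambda>y. \<alpha> * \<Lambda> y * \<rho> y * Fent' p (\<rho> y))"
    and "integrable lborel (\<lambda>y. - \<alpha> * \<Lambda> y * Fent p (\<zeta> y))"
    and "integrable lborel (\<lambda>y. - \<alpha> * \<Lambda> y * \<zeta> y * Fent' p (\<zeta> y))"
  shows "lambda_info p \<alpha> \<Lambda> \<rho> \<zeta>
    = (\<integral>y. \<alpha> * \<Lambda> y * Fent p (\<rho> y) \<partial>lborel) - (\<integral>y. \<alpha> * \<Lambda> y * \<rho> y * Fent' p (\<rho> y) \<partial>lborel)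
      + (\<integral>y. - \<alpha> * \<Lambda> y * Fent p (\<zeta> y) \<partial>lborel)
      - (\<integral>y. - \<alpha> * \<Lambda> y * \<zeta> y * Fent' p (\<zeta> y) \<partial>lborel)"
proof -
  have "1 / p * (\<zeta> y powr p - \<rho> y powr p) * \<alpha> * \<Lambda> y
      = \<alpha> * \<Lambda> y * Fent p (\<rho> y) - \<alpha> * \<Lambda> y * \<rho> y * Fent' p (\<rho> y)
        + (- \<alpha> * \<Lambda> y * Fent p (\<zeta> y)) - (- \<alpha> * \<Lambda> y * \<zeta> y * Fent' p (\<zeta> y))" for y
  proof -
    have "1 / p * (\<zeta> y powr p - \<rho> y powr p) * \<alpha> * \<Lambda> y
        = \<alpha> * \<Lambda> y * ((1 - \<rho> y powr p) / p) - \<alpha> * \<Lambda> y * ((1 - \<zeta> y powr p) / p)"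
      using p by (simp add: field_simps)
    also have "\<dots> = \<alpha> * \<Lambda> y * (Fent p (\<rho> y) - \<rho> y * Fent' p (\<rho> y))
        - \<alpha> * \<Lambda> y * (Fent p (\<zeta> y) - \<zeta> y * Fent' p (\<zeta> y))"
      by (simp only: Fent_minus_mult_Fent'[OF p pos(1)] Fent_minus_mult_Fent'[OF p pos(2)])
    finally show ?thesis
      by (simp add: algebra_simps)
  qed
  then show ?thesis
    unfolding lambda_info_def using assms(5-8) by simp
qed

lemma reaction_integrals_eq_react_diss:
  fixes U V u v :: "real \<Rightarrow> real"
  assumes p: "p \<noteq> 0" "p \<noteq> 1"
    and pos: "\<And>y. U y > 0" "\<And>y. V y > 0" "\<And>y. u y > 0" "\<And>y. v y > 0"
    and UV: "\<And>y. U y powr \<alpha> = V y powr \<alpha>"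
    and int_u: "integrable lborel (\<lambda>y. Fent' p (u y / U y) * (c * \<alpha> * k * (v y powr \<alpha> - u y powr \<alpha>)))"
    and int_v: "integrable lborel (\<lambda>y. Fent' p (v y / V y) * (- c * \<alpha> * k * (v y powr \<alpha> - u y powr \<alpha>)))"
  shows "(\<integral>y. Fent' p (u y / U y) * (c * \<alpha> * k * (v y powr \<alpha> - u y powr \<alpha>)) \<partial>lborel)
      + (\<integral>y. Fent' p (v y / V y) * (- c * \<alpha> * k * (v y powr \<alpha> - u y powr \<alpha>)) \<partial>lborel)
    = - (c * react_diss p k \<alpha> U (\<lambda>y. u y / U y) (\<lambda>y. v y / V y))"
proof -
  have pointwise: "Fent' p (u y / U y) * (c * \<alpha> * k * (v y powr \<alpha> - u y powr \<alpha>))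
      + Fent' p (v y / V y) * (- c * \<alpha> * k * (v y powr \<alpha> - u y powr \<alpha>))
    = - (c * (k * U y powr \<alpha> * (\<alpha> / (p - 1))
        * ((v y / V y) powr (p - 1) - (u y / U y) powr (p - 1))
        * ((v y / V y) powr \<alpha> - (u y / U y) powr \<alpha>)))" for y
  proof -
    have X: "v y powr \<alpha> - u y powr \<alpha> = U y powr \<alpha> * ((v y / V y) powr \<alpha> - (u y / U y) powr \<alpha>)"
      using pos[of y] UV[of y] by (simp add: powr_divide right_diff_distrib)
    define q where "q = 1 / (p - 1)"
    have F': "Fent' p z = (z powr (p - 1) - 1) * q" for z
      using p by (simp add: Fent'_def q_def)
    have "\<alpha> / (p - 1) = \<alpha> * q"
      by (simp add: q_def)
    then show ?thesis
      unfolding F' X by algebra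
  qed
  have "(\<integral>y. Fent' p (u y / U y) * (c * \<alpha> * k * (v y powr \<alpha> - u y powr \<alpha>)) \<partial>lborel)
      + (\<integral>y. Fent' p (v y / V y) * (- c * \<alpha> * k * (v y powr \<alpha> - u y powr \<alpha>)) \<partial>lborel)
    = (\<integral>y. Fent' p (u y / U y) * (c * \<alpha> * k * (v y powr \<alpha> - u y powr \<alpha>))
        + Fent' p (v y / V y) * (- c * \<alpha> * k * (v y powr \<alpha> - u y powr \<alpha>)) \<partial>lborel)"
    using int_u int_v by (rule Bochner_Integration.integral_add[symmetric])
  also have "\<dots> = - (c * react_diss p k \<alpha> U (\<lambda>y. u y / U y) (\<lambda>y. v y / V y))"
    unfolding pointwise react_diss_def by simp
  finally show ?thesis .
qed

lemma react_diss_nonneg: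
  assumes "k \<ge> 0" "\<alpha> > 0" "p \<noteq> 1" "\<And>y. \<rho> y > 0" "\<And>y. \<zeta> y > 0"
  shows "react_diss p k \<alpha> U \<rho> \<zeta> \<ge> 0"
  unfolding react_diss_def
proof (intro integral_nonneg_AE AE_I2)
  fix y
  have "0 \<le> (\<zeta> y powr (p - 1) - \<rho> y powr (p - 1)) / (p - 1) * (\<zeta> y powr \<alpha> - \<rho> y powr \<alpha>)"
    using assms by (intro powr_diff_div_mult_powr_diff_nonneg) auto
  moreover have "0 \<le> k * U y powr \<alpha> * \<alpha>"
    using assms by simp
  moreover have "k * U y powr \<alpha> * (\<alpha> / (p - 1))
      * (\<zeta> y powr (p - 1) - \<rho> y powr (p - 1)) * (\<zeta> y powr \<alpha> - \<rho> y powr \<alpha>)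
    = (k * U y powr \<alpha> * \<alpha>)
      * ((\<zeta> y powr (p - 1) - \<rho> y powr (p - 1)) / (p - 1) * (\<zeta> y powr \<alpha> - \<rho> y powr \<alpha>))"
    by (simp add: field_simps)
  ultimately show "0 \<le> k * U y powr \<alpha> * (\<alpha> / (p - 1))
      * (\<zeta> y powr (p - 1) - \<rho> y powr (p - 1)) * (\<zeta> y powr \<alpha> - \<rho> y powr \<alpha>)"
    by (metis mult_nonneg_nonneg)
qed

lemma fisher_info_nonneg:
  assumes "d1 \<ge> 0" "d2 \<ge> 0" "\<And>y. U y \<ge> 0" "\<And>y. V y \<ge> 0"
  shows "fisher_info p d1 d2 U V \<rho> \<zeta> \<ge> 0"
  unfolding fisher_info_def
  using assms by (intro integral_nonneg_AE AE_I2 add_nonneg_nonneg mult_nonneg_nonneg) auto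

lemma integral_deriv_entropy_density_eq:
  assumes p: "p \<noteq> 0" "p \<noteq> 1" and "\<alpha> = \<beta>"
    and profile: "similarity_profile d1 d2 \<alpha> \<beta> Am Ap U V \<Lambda>"
    and sol: "scaled_solution p d1 d2 k \<alpha> \<beta> Am Ap U V \<Lambda> u v" and \<tau>: "\<tau> > 0"
  shows "(\<integral>y. deriv (\<lambda>s. U y * Fent p (u s y / U y) + V y * Fent p (v s y / V y)) \<tau> \<partial>lborel)
    = - (fisher_info p d1 d2 U V (\<lambda>y. u \<tau> y / U y) (\<lambda>y. v \<tau> y / V y)
         + 1 / 2 * rel_entropy p U V (u \<tau>) (v \<tau>)
         - lambda_info p \<alpha> \<Lambda> (\<lambda>y. u \<tau> y / U y) (\<lambda>y. v \<tau> y / V y)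
         + exp \<tau> * react_diss p k \<alpha> U (\<lambda>y. u \<tau> y / U y) (\<lambda>y. v \<tau> y / V y))"
proof -
  have \<beta>: "\<beta> = \<alpha>"
    using \<open>\<alpha> = \<beta>\<close> ..
  have C2U: "C2 U" and C2V: "C2 V" and Upos: "\<And>y. U y > 0" and Vpos: "\<And>y. V y > 0"
    and profU: "\<And>y. d1 * deriv (deriv U) y + y / 2 * deriv U y + \<alpha> * \<Lambda> y = 0"
    and profV: "\<And>y. d2 * deriv (deriv V) y + y / 2 * deriv V y + - \<alpha> * \<Lambda> y = 0"
    and UV: "\<And>y. U y powr \<alpha> = V y powr \<alpha>"
    using profile unfolding similarity_profile_def \<beta> by auto
  have classical: "scaled_classical_solution d1 d2 k \<alpha> \<alpha> Am Ap u v"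
    and adm_u: "component_admissible p d1 U (\<lambda>y. \<alpha> * \<Lambda> y)
      (\<lambda>t y. exp t * \<alpha> * k * (v t y powr \<alpha> - u t y powr \<alpha>)) u"
    and adm_v: "component_admissible p d2 V (\<lambda>y. - \<alpha> * \<Lambda> y)
      (\<lambda>t y. - exp t * \<alpha> * k * (v t y powr \<alpha> - u t y powr \<alpha>)) v"
    using sol unfolding scaled_solution_def \<beta> by auto
  have upos: "\<And>y. u \<tau> y > 0" and vpos: "\<And>y. v \<tau> y > 0" and C2u: "C2 (u \<tau>)" and C2v: "C2 (v \<tau>)"
    and du: "\<And>y. ((\<lambda>s. u s y) has_real_derivative deriv (\<lambda>s. u s y) \<tau>) (at \<tau>)"
    and dv: "\<And>y. ((\<lambda>s. v s y) has_real_derivative deriv (\<lambda>s. v s y) \<tau>) (at \<tau>)"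
    and pde_u: "\<And>y. deriv (\<lambda>s. u s y) \<tau> = d1 * deriv (deriv (u \<tau>)) y + y / 2 * deriv (u \<tau>) y
      + exp \<tau> * \<alpha> * k * (v \<tau> y powr \<alpha> - u \<tau> y powr \<alpha>)"
    and pde_v: "\<And>y. deriv (\<lambda>s. v s y) \<tau> = d2 * deriv (deriv (v \<tau>)) y + y / 2 * deriv (v \<tau>) y
      - exp \<tau> * \<alpha> * k * (v \<tau> y powr \<alpha> - u \<tau> y powr \<alpha>)"
    using classical \<tau> unfolding scaled_classical_solution_def by auto
  note int_u = adm_u[unfolded component_admissible_def Let_def, rule_format, OF \<tau>]
  note int_v = adm_v[unfolded component_admissible_def Let_def, rule_format, OF \<tau>]
  note prod_u = component_entropy_production[OF p C2U Upos profU C2u upos adm_u \<tau>]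
  note prod_v = component_entropy_production[OF p C2V Vpos profV C2v vpos adm_v \<tau>]
  have "deriv (\<lambda>s. U y * Fent p (u s y / U y) + V y * Fent p (v s y / V y)) \<tau>
      = Fent' p (u \<tau> y / U y) * deriv (\<lambda>s. u s y) \<tau> + Fent' p (v \<tau> y / V y) * deriv (\<lambda>s. v s y) \<tau>"
    for y
    by (intro DERIV_imp_deriv DERIV_add has_real_derivative_weighted_Fent p Upos Vpos upos vpos du dv)
  then have "(\<integral>y. deriv (\<lambda>s. U y * Fent p (u s y / U y) + V y * Fent p (v s y / V y)) \<tau> \<partial>lborel)
      = (\<integral>y. Fent' p (u \<tau> y / U y) * (d1 * deriv (deriv (u \<tau>)) y + y / 2 * deriv (u \<tau>) y
            + exp \<tau> * \<alpha> * k * (v \<tau> y powr \<alpha> - u \<tau> y powr \<alpha>)) \<partial>lborel)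
        + (\<integral>y. Fent' p (v \<tau> y / V y) * (d2 * deriv (deriv (v \<tau>)) y + y / 2 * deriv (v \<tau>) y
            + - exp \<tau> * \<alpha> * k * (v \<tau> y powr \<alpha> - u \<tau> y powr \<alpha>)) \<partial>lborel)"
    using prod_u(1) prod_v(1) by (simp add: pde_u pde_v)
  moreover have "fisher_info p d1 d2 U V (\<lambda>y. u \<tau> y / U y) (\<lambda>y. v \<tau> y / V y)
      = (\<integral>y. d1 * U y * (u \<tau> y / U y) powr (p - 2) * (deriv (\<lambda>y. u \<tau> y / U y) y)\<^sup>2 \<partial>lborel)
        + (\<integral>y. d2 * V y * (v \<tau> y / V y) powr (p - 2) * (deriv (\<lambda>y. v \<tau> y / V y) y)\<^sup>2 \<partial>lborel)"
    unfolding fisher_info_def using int_u int_v by simp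
  moreover have "rel_entropy p U V (u \<tau>) (v \<tau>)
      = (\<integral>y. U y * Fent p (u \<tau> y / U y) \<partial>lborel) + (\<integral>y. V y * Fent p (v \<tau> y / V y) \<partial>lborel)"
    unfolding rel_entropy_def using int_u int_v by simp
  moreover have "lambda_info p \<alpha> \<Lambda> (\<lambda>y. u \<tau> y / U y) (\<lambda>y. v \<tau> y / V y)
      = (\<integral>y. \<alpha> * \<Lambda> y * Fent p (u \<tau> y / U y) \<partial>lborel)
        - (\<integral>y. \<alpha> * \<Lambda> y * (u \<tau> y / U y) * Fent' p (u \<tau> y / U y) \<partial>lborel)
        + (\<integral>y. - \<alpha> * \<Lambda> y * Fent p (v \<tau> y / V y) \<partial>lborel)
        - (\<integral>y. - \<alpha> * \<Lambda> y * (v \<tau> y / V y) * Fent' p (v \<tau> y / V y) \<partial>lborel)"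
    using int_u int_v upos vpos Upos Vpos by (intro lambda_info_eq_Fent_integrals p) auto
  moreover have "(\<integral>y. Fent' p (u \<tau> y / U y) * (exp \<tau> * \<alpha> * k * (v \<tau> y powr \<alpha> - u \<tau> y powr \<alpha>)) \<partial>lborel)
      + (\<integral>y. Fent' p (v \<tau> y / V y) * (- exp \<tau> * \<alpha> * k * (v \<tau> y powr \<alpha> - u \<tau> y powr \<alpha>)) \<partial>lborel)
    = - (exp \<tau> * react_diss p k \<alpha> U (\<lambda>y. u \<tau> y / U y) (\<lambda>y. v \<tau> y / V y))"
    using int_u int_v by (intro reaction_integrals_eq_react_diss p Upos Vpos upos vpos UV) auto
  ultimately show ?thesis
    using prod_u(2) prod_v(2) by linarith
qed

theorem mainTheorem3:
  fixes d1 d2 k \<alpha> \<beta> Am Ap p \<tau> :: real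
    and U V \<Lambda> :: "real \<Rightarrow> real"
    and u v :: "real \<Rightarrow> real \<Rightarrow> real"
  assumes "d1 > 0" and "d2 > 0" and "k > 0"
    and "\<alpha> \<ge> 1" and "\<beta> \<ge> 1" and "\<alpha> = \<beta>"
    and "Am > 0" and "Ap > 0"
    and "p \<noteq> 0" and "p \<noteq> 1"
    and "similarity_profile d1 d2 \<alpha> \<beta> Am Ap U V \<Lambda>"
    and "scaled_solution p d1 d2 k \<alpha> \<beta> Am Ap U V \<Lambda> u v"
    and "\<tau> > 0"
  shows "((\<lambda>s. rel_entropy p U V (u s) (v s)) has_real_derivative
            - ( fisher_info p d1 d2 U V (\<lambda>y. u \<tau> y / U y) (\<lambda>y. v \<tau> y / V y)
              + 1 / 2 * rel_entropy p U V (u \<tau>) (v \<tau>)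
              - lambda_info p \<alpha> \<Lambda> (\<lambda>y. u \<tau> y / U y) (\<lambda>y. v \<tau> y / V y)
              + exp \<tau> * react_diss p k \<alpha> U (\<lambda>y. u \<tau> y / U y) (\<lambda>y. v \<tau> y / V y)))
           (at \<tau>)
       \<and> react_diss p k \<alpha> U (\<lambda>y. u \<tau> y / U y) (\<lambda>y. v \<tau> y / V y) \<ge> 0
       \<and> fisher_info p d1 d2 U V (\<lambda>y. u \<tau> y / U y) (\<lambda>y. v \<tau> y / V y) \<ge> 0"
proof (intro conjI)
  have "((\<lambda>s. rel_entropy p U V (u s) (v s)) has_real_derivative
      (\<integral>y. deriv (\<lambda>s. U y * Fent p (u s y / U y) + V y * Fent p (v s y / V y)) \<tau> \<partial>lborel)) (at \<tau>)"
    using assms(12,13) unfolding scaled_solution_def by blast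
  then show "((\<lambda>s. rel_entropy p U V (u s) (v s)) has_real_derivative
            - ( fisher_info p d1 d2 U V (\<lambda>y. u \<tau> y / U y) (\<lambda>y. v \<tau> y / V y)
              + 1 / 2 * rel_entropy p U V (u \<tau>) (v \<tau>)
              - lambda_info p \<alpha> \<Lambda> (\<lambda>y. u \<tau> y / U y) (\<lambda>y. v \<tau> y / V y)
              + exp \<tau> * react_diss p k \<alpha> U (\<lambda>y. u \<tau> y / U y) (\<lambda>y. v \<tau> y / V y)))
           (at \<tau>)"
    unfolding integral_deriv_entropy_density_eq[OF assms(9,10,6,11,12,13)] .
  have "U y > 0" "V y > 0" "u \<tau> y > 0" "v \<tau> y > 0" for y
    using assms(11,12,13)
    unfolding similarity_profile_def scaled_solution_def scaled_classical_solution_def by auto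
  then show "react_diss p k \<alpha> U (\<lambda>y. u \<tau> y / U y) (\<lambda>y. v \<tau> y / V y) \<ge> 0"
    and "fisher_info p d1 d2 U V (\<lambda>y. u \<tau> y / U y) (\<lambda>y. v \<tau> y / V y) \<ge> 0"
    using assms(1-4,10) by (auto intro!: react_diss_nonneg fisher_info_nonneg simp: less_imp_le)
qed

end
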